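(* Let $A\in\mathbb{R}^{m\times d}$ have the phase retrieval property in $\mathbb{R}^d$. Then for any $b\in\mathbb{R}^m$, the number of solutions of $\min_{x\in\mathbb{R}^d}\|\,|Ax|-b\,\|^2$ is finite.
   Context: $\|\cdot\|$ is the Euclidean norm and $|Ax|$ the entrywise absolute value. $A$ has the phase retrieval property in $\mathbb{R}^d$ if for all $x,y\in\mathbb{R}^d$, $|Ax|=|Ay|$ implies $x=\pm y$. *)

theory Defs
  imports "HOL-Analysis.Analysis"
begin

definition vabs :: "real ^ 'm \<Rightarrow> real ^ 'm" where
  "vabs v = (\<chi> i. \<bar>v $ i\<bar>)"

definition phase_retrieval :: "real ^ 'd ^ 'm \<Rightarrow> bool" where
  "phase_retrieval A \<longleftrightarrow>
     (\<forall>x y :: real ^ 'd. vabs (A *v x) = vabs (A *v y) \<longrightarrow> x = y \<or> x = - y)"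

definition pr_solutions :: "real ^ 'd ^ 'm \<Rightarrow> real ^ 'm \<Rightarrow> (real ^ 'd) set" where
  "pr_solutions A b =
     {x. \<forall>y. (norm (vabs (A *v x) - b))\<^sup>2 \<le> (norm (vabs (A *v y) - b))\<^sup>2}"

end

theory Submission
  imports Defs
begin

text \<open>On the set of minimizers, |Ax| is constant on each sign pattern of Ax: for two minimizers
  with the same signs, |A m| of their midpoint m is the midpoint of |Ax| and |Ay|, and by strict
  convexity of the squared distance to b this midpoint would do strictly better unless
  |Ax| = |Ay|. Phase retrieval then leaves at most the two solutions x and -x per sign pattern,
  and there are only finitely many sign patterns.\<close>

lemma norm_midpoint_diff_squared:
  fixes u v b :: "'a::real_inner"
  shows "(norm (midpoint u v - b))\<^sup>2
    = ((norm (u - b))\<^sup>2 + (norm (v - b))\<^sup>2) / 2 - (norm (u - v))\<^sup>2 / 4"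
  by (simp add: midpoint_def power2_norm_eq_inner inner_add_left inner_add_right
      inner_diff_left inner_diff_right inner_commute algebra_simps) (simp add: field_simps)

lemma eq_if_norm_midpoint_diff_ge:
  fixes u v b :: "'a::real_inner"
  assumes "norm (u - b) = norm (v - b)" and "norm (u - b) \<le> norm (midpoint u v - b)"
  shows "u = v"
proof -
  have "(norm (u - b))\<^sup>2 \<le> (norm (midpoint u v - b))\<^sup>2"
    using assms(2) by (simp add: power_mono)
  then have "(norm (u - v))\<^sup>2 \<le> 0"
    unfolding norm_midpoint_diff_squared assms(1) by simp
  then show ?thesis by simp
qed

lemma vabs_midpoint:
  assumes "\<And>i. (0 \<le> v $ i) = (0 \<le> w $ i)"
  shows "vabs (midpoint v w) = midpoint (vabs v) (vabs w)"
proof -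
  have "\<bar>inverse 2 * (a + c)\<bar> = inverse 2 * (\<bar>a\<bar> + \<bar>c\<bar>)"
    if "(0 \<le> a) = (0 \<le> c)" for a c :: real
    using that by auto
  then show ?thesis
    using assms by (simp add: vabs_def midpoint_def vec_eq_iff)
qed

lemma pr_solutions_same_signs_vabs_eq:
  fixes A :: "real ^ 'd ^ 'm"
  assumes x: "x \<in> pr_solutions A b" and y: "y \<in> pr_solutions A b"
    and signs: "\<And>i. (0 \<le> (A *v x) $ i) = (0 \<le> (A *v y) $ i)"
  shows "vabs (A *v x) = vabs (A *v y)"
proof (rule eq_if_norm_midpoint_diff_ge)
  have "(norm (vabs (A *v x) - b))\<^sup>2 = (norm (vabs (A *v y) - b))\<^sup>2"
    using x y unfolding pr_solutions_def by (simp add: order_antisym)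
  then show "norm (vabs (A *v x) - b) = norm (vabs (A *v y) - b)"
    by (simp add: power2_eq_iff_nonneg)
  have "midpoint (vabs (A *v x)) (vabs (A *v y)) = vabs (A *v midpoint x y)"
    using signs by (simp add: vabs_midpoint midpoint_linear_image[symmetric])
  moreover have "(norm (vabs (A *v x) - b))\<^sup>2 \<le> (norm (vabs (A *v midpoint x y) - b))\<^sup>2"
    using x unfolding pr_solutions_def by blast
  ultimately show "norm (vabs (A *v x) - b) \<le> norm (midpoint (vabs (A *v x)) (vabs (A *v y)) - b)"
    by (simp add: power2_le_iff_abs_le)
qed

lemma pr_solutions_same_signs:
  fixes A :: "real ^ 'd ^ 'm"
  assumes "phase_retrieval A" "x \<in> pr_solutions A b" "y \<in> pr_solutions A b"
    and "\<And>i. (0 \<le> (A *v x) $ i) = (0 \<le> (A *v y) $ i)"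
  shows "y = x \<or> y = - x"
  using assms pr_solutions_same_signs_vabs_eq[of y A b x] unfolding phase_retrieval_def by metis

theorem theorem3p3:
  fixes A :: "real ^ 'd ^ 'm" and b :: "real ^ 'm"
  assumes "phase_retrieval A"
  shows "finite (pr_solutions A b)"
proof -
  define signs where "signs x = (\<lambda>i. 0 \<le> (A *v x) $ i)" for x :: "real ^ 'd"
  have "finite (signs -` {s} \<inter> pr_solutions A b)" for s
  proof (cases "signs -` {s} \<inter> pr_solutions A b = {}")
    case False
    then obtain x where x: "x \<in> pr_solutions A b" "signs x = s" by blast
    have "signs -` {s} \<inter> pr_solutions A b \<subseteq> {x, - x}"
    proof
      fix y assume y: "y \<in> signs -` {s} \<inter> pr_solutions A b"
      then have "signs x = signs y" using x(2) by simp
      then have "(0 \<le> (A *v x) $ i) = (0 \<le> (A *v y) $ i)" for i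
        unfolding signs_def by (simp add: fun_eq_iff)
      then show "y \<in> {x, - x}"
        using pr_solutions_same_signs[OF assms x(1)] y by blast
    qed
    then show ?thesis by (rule finite_subset) simp
  qed simp
  then have "finite (signs -` UNIV \<inter> pr_solutions A b)"
    using finite_finite_vimage_IntI[OF finite_class.finite_UNIV] by blast
  then show ?thesis by simp
qed

end
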